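(* Let $(G,M,\Delta)$ be a Garside structure and $(H,N,\delta)$ a parabolic substructure with $H\ne\{1\}$. Let $\mathcal S=\mathrm{Div}(\Delta)\setminus\{1\}$ and let $d$ be the word metric on $G$ with respect to $\mathcal S$. Then $G$ has $5$-fellow projections on $H$ with respect to $\mathcal S$: for all $\alpha_1,\alpha_2\in G$ with $d(\alpha_1,\alpha_2)=1$ and every $\beta_1\in\pi_H(\alpha_1)$ there exists $\beta_2\in\pi_H(\alpha_2)$ with $d(\beta_1,\beta_2)\le 5$.
   Context: Let $G$ be a group and $M$ a submonoid with $M\cap M^{-1}=\{1\}$. Define $\alpha\le_L\beta$ iff $\alpha^{-1}\beta\in M$, and $\alpha\le_R\beta$ iff $\beta\alpha^{-1}\in M$. For $a\in M$ let $\mathrm{Div}_L(a)=\{b\in M: b\le_L a\}$, $\mathrm{Div}_R(a)=\{b\in M: b\le_R a\}$; $a$ is balanced if these coincide, and then $\mathrm{Div}(a)$ denotes this set. $M$ is Noetherian if each $a\in M$ admits an $n$ such that $a$ is not a product of more than $n$ non-trivial factors. A Garside structure $(G,M,\Delta)$: $\Delta\in M$ balanced, $M$ Noetherian, $\mathrm{Div}(\Delta)$ finite and generating $M$ as a monoid and $G$ as a group, $(G,\le_L)$ a lattice. A parabolic substructure $(H,N,\delta)$: $\delta\in M$ balanced, $H$ (resp. $N$) the subgroup (resp. submonoid) generated by $\mathrm{Div}(\delta)$, and $\mathrm{Div}(\delta)=\mathrm{Div}(\Delta)\cap N$. The word metric is $d(\alpha,\beta)=\lg(\alpha^{-1}\beta)$,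 with $\lg$ the word length with respect to $\mathcal S$; $d(\alpha,H)=\min_{\beta\in H}d(\alpha,\beta)$, and the projection of $\alpha$ on $H$ is $\pi_H(\alpha)=\{\beta\in H: d(\alpha,\beta)=d(\alpha,H)\}$. *)

theory Defs
  imports "HOL-Algebra.Algebra"
begin

definition lprod :: "('a, 'b) monoid_scheme \<Rightarrow> 'a list \<Rightarrow> 'a" where
  "lprod G xs = foldr (\<lambda>x y. x \<otimes>\<^bsub>G\<^esub> y) xs \<one>\<^bsub>G\<^esub>"

definition mon_gen :: "('a, 'b) monoid_scheme \<Rightarrow> 'a set \<Rightarrow> 'a set" where
  "mon_gen G A = {lprod G xs | xs. set xs \<subseteq> A}"

definition leL :: "('a, 'b) monoid_scheme \<Rightarrow> 'a set \<Rightarrow> 'a \<Rightarrow> 'a \<Rightarrow> bool" where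
  "leL G M a b \<longleftrightarrow> inv\<^bsub>G\<^esub> a \<otimes>\<^bsub>G\<^esub> b \<in> M"

definition leR :: "('a, 'b) monoid_scheme \<Rightarrow> 'a set \<Rightarrow> 'a \<Rightarrow> 'a \<Rightarrow> bool" where
  "leR G M a b \<longleftrightarrow> b \<otimes>\<^bsub>G\<^esub> inv\<^bsub>G\<^esub> a \<in> M"

definition DivL :: "('a, 'b) monoid_scheme \<Rightarrow> 'a set \<Rightarrow> 'a \<Rightarrow> 'a set" where
  "DivL G M a = {b \<in> M. leL G M b a}"

definition DivR :: "('a, 'b) monoid_scheme \<Rightarrow> 'a set \<Rightarrow> 'a \<Rightarrow> 'a set" where
  "DivR G M a = {b \<in> M. leR G M b a}"

definition balanced :: "('a, 'b) monoid_scheme \<Rightarrow> 'a set \<Rightarrow> 'a \<Rightarrow> bool" where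
  "balanced G M a \<longleftrightarrow> a \<in> M \<and> DivL G M a = DivR G M a"

(* Div(a) for balanced a *)
abbreviation Div :: "('a, 'b) monoid_scheme \<Rightarrow> 'a set \<Rightarrow> 'a \<Rightarrow> 'a set" where
  "Div G M a \<equiv> DivL G M a"

definition pointed_submonoid :: "('a, 'b) monoid_scheme \<Rightarrow> 'a set \<Rightarrow> bool" where
  "pointed_submonoid G M \<longleftrightarrow> M \<subseteq> carrier G \<and> \<one>\<^bsub>G\<^esub> \<in> M
     \<and> (\<forall>x\<in>M. \<forall>y\<in>M. x \<otimes>\<^bsub>G\<^esub> y \<in> M)
     \<and> M \<inter> (\<lambda>x. inv\<^bsub>G\<^esub> x) ` M = {\<one>\<^bsub>G\<^esub>}"

definition noetherian :: "('a, 'b) monoid_scheme \<Rightarrow> 'a set \<Rightarrow> bool" where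
  "noetherian G M \<longleftrightarrow> (\<forall>a\<in>M. \<exists>n::nat. \<forall>xs. set xs \<subseteq> M - {\<one>\<^bsub>G\<^esub>} \<and> lprod G xs = a
       \<longrightarrow> length xs \<le> n)"

definition leL_lattice :: "('a, 'b) monoid_scheme \<Rightarrow> 'a set \<Rightarrow> bool" where
  "leL_lattice G M \<longleftrightarrow> (\<forall>a\<in>carrier G. \<forall>b\<in>carrier G.
     (\<exists>m\<in>carrier G. leL G M m a \<and> leL G M m b \<and>
        (\<forall>c\<in>carrier G. leL G M c a \<and> leL G M c b \<longrightarrow> leL G M c m)) \<and>
     (\<exists>j\<in>carrier G. leL G M a j \<and> leL G M b j \<and>
        (\<forall>c\<in>carrier G. leL G M a c \<and> leL G M b c \<longrightarrow> leL G M j c)))"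

definition garside_structure :: "('a, 'b) monoid_scheme \<Rightarrow> 'a set \<Rightarrow> 'a \<Rightarrow> bool" where
  "garside_structure G M \<Delta> \<longleftrightarrow> group G \<and> pointed_submonoid G M \<and>
     balanced G M \<Delta> \<and> noetherian G M \<and> finite (Div G M \<Delta>) \<and>
     mon_gen G (Div G M \<Delta>) = M \<and> generate G (Div G M \<Delta>) = carrier G \<and>
     leL_lattice G M"

definition parabolic_substructure ::
  "('a, 'b) monoid_scheme \<Rightarrow> 'a set \<Rightarrow> 'a \<Rightarrow> 'a set \<Rightarrow> 'a set \<Rightarrow> 'a \<Rightarrow> bool" where
  "parabolic_substructure G M \<Delta> H N \<delta> \<longleftrightarrow> balanced G M \<delta> \<and>
     H = generate G (Div G M \<delta>) \<and> N = mon_gen G (Div G M \<delta>) \<and>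
     Div G M \<delta> = Div G M \<Delta> \<inter> N"

definition wlen :: "('a, 'b) monoid_scheme \<Rightarrow> 'a set \<Rightarrow> 'a \<Rightarrow> nat" where
  "wlen G S x = (LEAST n. \<exists>xs. length xs = n \<and>
      set xs \<subseteq> S \<union> (\<lambda>s. inv\<^bsub>G\<^esub> s) ` S \<and> lprod G xs = x)"

definition wdist :: "('a, 'b) monoid_scheme \<Rightarrow> 'a set \<Rightarrow> 'a \<Rightarrow> 'a \<Rightarrow> nat" where
  "wdist G S a b = wlen G S (inv\<^bsub>G\<^esub> a \<otimes>\<^bsub>G\<^esub> b)"

definition setdist :: "('a, 'b) monoid_scheme \<Rightarrow> 'a set \<Rightarrow> 'a \<Rightarrow> 'a set \<Rightarrow> nat" where
  "setdist G S a H = (LEAST n. \<exists>b\<in>H. wdist G S a b = n)"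

definition proj :: "('a, 'b) monoid_scheme \<Rightarrow> 'a set \<Rightarrow> 'a set \<Rightarrow> 'a \<Rightarrow> 'a set" where
  "proj G S H a = {b \<in> H. wdist G S a b = setdist G S a H}"

end

(*
  In a Garside group the word metric for the simple elements is an interval metric:
  d(alpha, beta) <= n iff alpha Delta^-b <= beta <= alpha Delta^a for some a + b <= n,
  where <= is the prefix order, a lattice order invariant under left multiplication.
  The parabolic subgroup H is a convex sublattice of (G, <=), and an element of H lying
  below g Delta^k can be replaced, inside H, by one lying below g at the cost of a right
  factor Delta^-k (dually from above); both facts rest on the closure of the parabolic
  submonoid under left divisors.  If d(alpha1, alpha2) = 1 and beta1 is a projection of
  alpha1, then beta1 lies in a box around alpha2 whose size exceeds d(alpha2, H) by at
  most 2.  Shrinking this box to size d(alpha2, H) while keeping a point of H in it, and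
  clamping beta1 into the smaller box by lattice operations inside H, gives a projection
  beta2 of alpha2 with d(beta1, beta2) <= 2.
*)

theory Submission
  imports Defs
begin

lemma (in monoid) lprod_Nil [simp]: "lprod G [] = \<one>"
  by (simp add: lprod_def)

lemma (in monoid) lprod_Cons [simp]: "lprod G (x # xs) = x \<otimes> lprod G xs"
  by (simp add: lprod_def)

lemma (in monoid) lprod_closed [simp]: "set xs \<subseteq> carrier G \<Longrightarrow> lprod G xs \<in> carrier G"
  by (induction xs) auto

lemma (in monoid) lprod_append:
  "set xs \<subseteq> carrier G \<Longrightarrow> set ys \<subseteq> carrier G \<Longrightarrow> lprod G (xs @ ys) = lprod G xs \<otimes> lprod G ys"
  by (induction xs) (auto simp: m_assoc)

lemma (in monoid) mon_gen_one: "\<one> \<in> mon_gen G A"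
  unfolding mon_gen_def by (auto intro!: exI[of _ "[]"])

lemma (in monoid) mon_gen_incl: "A \<subseteq> carrier G \<Longrightarrow> a \<in> A \<Longrightarrow> a \<in> mon_gen G A"
  unfolding mon_gen_def by (auto intro!: exI[of _ "[a]"])

lemma (in monoid) mon_gen_subset: "A \<subseteq> carrier G \<Longrightarrow> mon_gen G A \<subseteq> carrier G"
  unfolding mon_gen_def by auto

lemma (in monoid) mon_gen_mult:
  assumes "A \<subseteq> carrier G" "x \<in> mon_gen G A" "y \<in> mon_gen G A"
  shows "x \<otimes> y \<in> mon_gen G A"
proof -
  obtain xs ys where "x = lprod G xs" "set xs \<subseteq> A" "y = lprod G ys" "set ys \<subseteq> A"
    using assms by (auto simp: mon_gen_def)
  then show ?thesis
    using assms by (auto simp: mon_gen_def lprod_append intro!: exI[of _ "xs @ ys"])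
qed

lemma (in monoid) mon_gen_induct [consumes 2, case_names one mult]:
  assumes "A \<subseteq> carrier G" "x \<in> mon_gen G A"
    and "P \<one>"
    and "\<And>a y. a \<in> A \<Longrightarrow> y \<in> mon_gen G A \<Longrightarrow> P y \<Longrightarrow> P (a \<otimes> y)"
  shows "P x"
proof -
  obtain xs where x: "x = lprod G xs" "set xs \<subseteq> A"
    using assms(2) by (auto simp: mon_gen_def)
  from x(2) have "P (lprod G xs)"
  proof (induction xs)
    case Nil
    then show ?case using assms(3) by simp
  next
    case (Cons a xs)
    then have "lprod G xs \<in> mon_gen G A" by (auto simp: mon_gen_def)
    with Cons assms(4) show ?case by simp
  qed
  with x show ?thesis by simp
qed

lemma (in group) inv_mult_cancel_left [simp]:
  "y \<in> carrier G \<Longrightarrow> z \<in> carrier G \<Longrightarrow> y \<otimes> (inv y \<otimes> z) = z"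
  by (simp add: m_assoc[symmetric])

lemma (in group) mult_inv_cancel_left [simp]:
  "y \<in> carrier G \<Longrightarrow> z \<in> carrier G \<Longrightarrow> inv y \<otimes> (y \<otimes> z) = z"
  by (simp add: m_assoc[symmetric])

lemma setdist_le: "h \<in> H \<Longrightarrow> setdist G S \<alpha> H \<le> wdist G S \<alpha> h"
  unfolding setdist_def by (rule Least_le) auto

lemma setdist_attained: "h \<in> H \<Longrightarrow> \<exists>h'\<in>H. wdist G S \<alpha> h' = setdist G S \<alpha> H"
  unfolding setdist_def by (rule LeastI_ex) auto

lemma proj_memI: "h \<in> H \<Longrightarrow> wdist G S \<alpha> h \<le> setdist G S \<alpha> H \<Longrightarrow> h \<in> proj G S H \<alpha>"
  using setdist_le[of h H G S \<alpha>] unfolding proj_def by simp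

locale pointed_group = group G for G :: "('a, 'b) monoid_scheme" (structure) +
  fixes M :: "'a set"
  assumes pointed: "pointed_submonoid G M"
begin

abbreviation prefix_le :: "'a \<Rightarrow> 'a \<Rightarrow> bool" (infix "\<preceq>" 50)
  where "x \<preceq> y \<equiv> leL G M x y"

lemma M_subset: "M \<subseteq> carrier G"
  using pointed by (simp add: pointed_submonoid_def)

lemma M_closed [simp]: "x \<in> M \<Longrightarrow> x \<in> carrier G"
  using M_subset by auto

lemma one_in_M [simp]: "\<one> \<in> M"
  using pointed by (simp add: pointed_submonoid_def)

lemma M_mult: "x \<in> M \<Longrightarrow> y \<in> M \<Longrightarrow> x \<otimes> y \<in> M"
  using pointed by (simp add: pointed_submonoid_def)

lemma M_inv_eq_one:
  assumes "x \<in> M" "inv x \<in> M"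
  shows "x = \<one>"
proof -
  have "x \<in> (\<lambda>y. inv y) ` M"
    using assms by (intro image_eqI[of _ _ "inv x"]) auto
  with assms pointed show ?thesis by (auto simp: pointed_submonoid_def)
qed

lemma leL_iff: "x \<preceq> y \<longleftrightarrow> inv x \<otimes> y \<in> M"
  by (simp add: leL_def)

lemma leL_refl [simp]: "x \<in> carrier G \<Longrightarrow> x \<preceq> x"
  by (simp add: leL_iff)

lemma leL_trans:
  assumes "x \<preceq> y" "y \<preceq> z" "x \<in> carrier G" "y \<in> carrier G" "z \<in> carrier G"
  shows "x \<preceq> z"
proof -
  have "inv x \<otimes> z = (inv x \<otimes> y) \<otimes> (inv y \<otimes> z)"
    using assms by (simp add: m_assoc)
  with assms show ?thesis by (simp add: leL_iff M_mult)
qed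

lemma leL_antisym:
  assumes "x \<preceq> y" "y \<preceq> x" "x \<in> carrier G" "y \<in> carrier G"
  shows "x = y"
proof -
  have "inv (inv x \<otimes> y) = inv y \<otimes> x"
    using assms by (simp add: inv_mult_group)
  with assms have "inv x \<otimes> y = \<one>"
    by (intro M_inv_eq_one) (simp_all add: leL_iff)
  with assms show ?thesis
    by (metis inv_closed inv_equality inv_inv)
qed

lemma leL_mult_left_iff:
  assumes "x \<in> carrier G" "y \<in> carrier G" "z \<in> carrier G"
  shows "z \<otimes> x \<preceq> z \<otimes> y \<longleftrightarrow> x \<preceq> y"
proof -
  have "inv (z \<otimes> x) \<otimes> (z \<otimes> y) = inv x \<otimes> y"
    using assms by (simp add: inv_mult_group m_assoc)
  then show ?thesis by (simp add: leL_iff)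
qed

lemma one_leL_iff: "m \<in> carrier G \<Longrightarrow> \<one> \<preceq> m \<longleftrightarrow> m \<in> M"
  by (simp add: leL_iff)

lemma leL_mult_M: "x \<in> carrier G \<Longrightarrow> m \<in> M \<Longrightarrow> x \<preceq> x \<otimes> m"
  by (simp add: leL_iff m_assoc[symmetric])

lemma leL_mult_inv_M: "x \<in> carrier G \<Longrightarrow> m \<in> M \<Longrightarrow> x \<otimes> inv m \<preceq> x"
  by (simp add: leL_iff inv_mult_group m_assoc)

lemma leL_one_antisym: "m \<in> M \<Longrightarrow> m \<preceq> \<one> \<Longrightarrow> m = \<one>"
  using leL_antisym[of m \<one>] by (simp add: one_leL_iff)

lemma pow_leL_pow_add:
  "e \<in> M \<Longrightarrow> e [^] (k::nat) \<preceq> e [^] (k + m)"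
proof -
  assume e: "e \<in> M"
  then have "e [^] m \<in> M" by (induction m) (auto simp: M_mult)
  with e show ?thesis using leL_mult_M[of "e [^] k" "e [^] m"] by (simp add: nat_pow_mult)
qed

lemma Div_iff: "c \<in> Div G M e \<longleftrightarrow> c \<in> M \<and> c \<preceq> e"
  by (simp add: DivL_def)

lemma Div_closed [simp]: "c \<in> Div G M e \<Longrightarrow> c \<in> carrier G"
  by (simp add: Div_iff)

lemma balanced_closed [simp]: "balanced G M e \<Longrightarrow> e \<in> carrier G"
  by (simp add: balanced_def)

lemma balanced_in_M: "balanced G M e \<Longrightarrow> e \<in> M"
  by (simp add: balanced_def)

lemma balanced_in_Div: "balanced G M e \<Longrightarrow> e \<in> Div G M e"
  using balanced_in_M by (simp add: Div_iff)

lemma one_in_Div: "balanced G M e \<Longrightarrow> \<one> \<in> Div G M e"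
  using balanced_in_M by (simp add: Div_iff leL_iff)

lemma Div_right_complement_in_M:
  assumes "balanced G M e" "c \<in> Div G M e"
  shows "e \<otimes> inv c \<in> M"
proof -
  from assms have "c \<in> DivR G M e" by (simp add: balanced_def)
  then show ?thesis by (simp add: DivR_def leR_def)
qed

lemma Div_left_complement:
  assumes "balanced G M e" "c \<in> Div G M e"
  shows "inv c \<otimes> e \<in> Div G M e"
proof -
  have "inv c \<otimes> e \<in> DivR G M e"
  proof -
    have "e \<otimes> inv (inv c \<otimes> e) = c"
      using assms by (simp add: inv_mult_group m_assoc)
    with assms show ?thesis by (simp add: DivR_def leR_def Div_iff leL_iff)
  qed
  with assms show ?thesis by (simp add: balanced_def)
qed

lemma Div_right_complement:
  assumes "balanced G M e" "c \<in> Div G M e"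
  shows "e \<otimes> inv c \<in> Div G M e"
proof -
  have "inv (e \<otimes> inv c) \<otimes> e = c"
    using assms by (simp add: inv_mult_group m_assoc)
  with assms Div_right_complement_in_M[OF assms] show ?thesis
    by (simp add: Div_iff leL_iff)
qed

lemma Div_conj:
  assumes "balanced G M e" "c \<in> Div G M e"
  shows "inv e \<otimes> c \<otimes> e \<in> Div G M e" and "e \<otimes> c \<otimes> inv e \<in> Div G M e"
proof -
  have "inv (inv c \<otimes> e) \<otimes> e = inv e \<otimes> c \<otimes> e"
    using assms by (simp add: inv_mult_group)
  with Div_left_complement[OF assms(1) Div_left_complement[OF assms]]
  show "inv e \<otimes> c \<otimes> e \<in> Div G M e" by simp
  have "e \<otimes> inv (e \<otimes> inv c) = e \<otimes> c \<otimes> inv e"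
    using assms by (simp add: inv_mult_group m_assoc)
  with Div_right_complement[OF assms(1) Div_right_complement[OF assms]]
  show "e \<otimes> c \<otimes> inv e \<in> Div G M e" by simp
qed

lemma Div_conj_pow:
  assumes "balanced G M e" "c \<in> Div G M e"
  shows "inv (e [^] (n::nat)) \<otimes> c \<otimes> e [^] n \<in> Div G M e \<and> e [^] n \<otimes> c \<otimes> inv (e [^] n) \<in> Div G M e"
  using assms(2)
proof (induction n arbitrary: c)
  case 0
  then show ?case by simp
next
  case (Suc n)
  have e: "e \<in> carrier G" using assms by simp
  have "inv (e [^] Suc n) \<otimes> c \<otimes> e [^] Suc n = inv (e [^] n) \<otimes> (inv e \<otimes> c \<otimes> e) \<otimes> e [^] n"
    using Suc.prems e nat_pow_Suc2[of e n] by (simp add: inv_mult_group m_assoc del: nat_pow_Suc)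
  moreover have "e [^] Suc n \<otimes> c \<otimes> inv (e [^] Suc n) = e [^] n \<otimes> (e \<otimes> c \<otimes> inv e) \<otimes> inv (e [^] n)"
    using Suc.prems e by (simp add: inv_mult_group m_assoc)
  ultimately show ?case using Suc Div_conj[OF assms(1) Suc.prems] by simp
qed

lemma mon_gen_Div_conj_pow:
  assumes "balanced G M e" "m \<in> mon_gen G (Div G M e)"
  shows "inv (e [^] (n::nat)) \<otimes> m \<otimes> e [^] n \<in> mon_gen G (Div G M e)
       \<and> e [^] n \<otimes> m \<otimes> inv (e [^] n) \<in> mon_gen G (Div G M e)"
proof -
  have sub: "Div G M e \<subseteq> carrier G" by auto
  have e: "e [^] n \<in> carrier G" using assms by simp
  from sub assms(2) show ?thesis
  proof (induction m rule: mon_gen_induct)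
    case one
    from e show ?case by (simp add: mon_gen_one)
  next
    case (mult a y)
    have y: "y \<in> carrier G" using mult mon_gen_subset[OF sub] by auto
    have "inv (e [^] n) \<otimes> (a \<otimes> y) \<otimes> e [^] n
          = (inv (e [^] n) \<otimes> a \<otimes> e [^] n) \<otimes> (inv (e [^] n) \<otimes> y \<otimes> e [^] n)"
      and "e [^] n \<otimes> (a \<otimes> y) \<otimes> inv (e [^] n)
          = (e [^] n \<otimes> a \<otimes> inv (e [^] n)) \<otimes> (e [^] n \<otimes> y \<otimes> inv (e [^] n))"
      using mult.hyps(1) y e by (simp_all add: m_assoc)
    with mult Div_conj_pow[OF assms(1) mult.hyps(1), of n] show ?case
      by (auto intro: mon_gen_mult[OF sub] mon_gen_incl[OF sub])
  qed
qed

lemma Div_prefix_closed: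
  assumes "c \<in> M" "c \<preceq> x" "x \<in> Div G M e" "e \<in> carrier G"
  shows "c \<in> Div G M e"
  using assms leL_trans[of c x e] by (auto simp: Div_iff)

lemma Div_left_quotient:
  assumes "balanced G M e" "d \<in> M" "d \<preceq> x" "x \<in> Div G M e"
  shows "inv d \<otimes> x \<in> Div G M e"
proof -
  have d: "d \<in> carrier G" "d \<in> Div G M e"
    using assms Div_prefix_closed by auto
  have "inv d \<otimes> x \<preceq> inv d \<otimes> e"
    using assms d by (simp add: leL_mult_left_iff Div_iff)
  moreover have "inv d \<otimes> e \<preceq> e"
    using Div_left_complement[OF assms(1) d(2)] by (simp add: Div_iff)
  ultimately show ?thesis
    using assms d leL_trans[of "inv d \<otimes> x" "inv d \<otimes> e" e] by (simp add: Div_iff leL_iff)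
qed

end

locale lattice_pointed_group = pointed_group +
  assumes lattice: "leL_lattice G M"
begin

definition meetL :: "'a \<Rightarrow> 'a \<Rightarrow> 'a" where
  "meetL a b = (SOME m. m \<in> carrier G \<and> m \<preceq> a \<and> m \<preceq> b \<and>
                   (\<forall>c\<in>carrier G. c \<preceq> a \<and> c \<preceq> b \<longrightarrow> c \<preceq> m))"

definition joinL :: "'a \<Rightarrow> 'a \<Rightarrow> 'a" where
  "joinL a b = (SOME j. j \<in> carrier G \<and> a \<preceq> j \<and> b \<preceq> j \<and>
                   (\<forall>c\<in>carrier G. a \<preceq> c \<and> b \<preceq> c \<longrightarrow> j \<preceq> c))"

lemma meetL_spec:
  assumes "a \<in> carrier G" "b \<in> carrier G"
  shows "meetL a b \<in> carrier G \<and> meetL a b \<preceq> a \<and> meetL a b \<preceq> b \<and>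
         (\<forall>c\<in>carrier G. c \<preceq> a \<and> c \<preceq> b \<longrightarrow> c \<preceq> meetL a b)"
proof -
  have "\<exists>m. m \<in> carrier G \<and> m \<preceq> a \<and> m \<preceq> b \<and> (\<forall>c\<in>carrier G. c \<preceq> a \<and> c \<preceq> b \<longrightarrow> c \<preceq> m)"
    using lattice assms unfolding leL_lattice_def by blast
  then show ?thesis unfolding meetL_def by (rule someI_ex)
qed

lemma joinL_spec:
  assumes "a \<in> carrier G" "b \<in> carrier G"
  shows "joinL a b \<in> carrier G \<and> a \<preceq> joinL a b \<and> b \<preceq> joinL a b \<and>
         (\<forall>c\<in>carrier G. a \<preceq> c \<and> b \<preceq> c \<longrightarrow> joinL a b \<preceq> c)"
proof -
  have "\<exists>j. j \<in> carrier G \<and> a \<preceq> j \<and> b \<preceq> j \<and> (\<forall>c\<in>carrier G. a \<preceq> c \<and> b \<preceq> c \<longrightarrow> j \<preceq> c)"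
    using lattice assms unfolding leL_lattice_def by blast
  then show ?thesis unfolding joinL_def by (rule someI_ex)
qed

context
  fixes a b :: 'a
  assumes ab: "a \<in> carrier G" "b \<in> carrier G"
begin

lemma meetL_closed [simp]: "meetL a b \<in> carrier G"
  and meetL_le1: "meetL a b \<preceq> a"
  and meetL_le2: "meetL a b \<preceq> b"
  and meetL_greatest: "c \<in> carrier G \<Longrightarrow> c \<preceq> a \<Longrightarrow> c \<preceq> b \<Longrightarrow> c \<preceq> meetL a b"
  using meetL_spec[OF ab] by blast+

lemma joinL_closed [simp]: "joinL a b \<in> carrier G"
  and joinL_ge1: "a \<preceq> joinL a b"
  and joinL_ge2: "b \<preceq> joinL a b"
  and joinL_least: "c \<in> carrier G \<Longrightarrow> a \<preceq> c \<Longrightarrow> b \<preceq> c \<Longrightarrow> joinL a b \<preceq> c"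
  using joinL_spec[OF ab] by blast+

end

lemma meetL_mult_left:
  assumes "a \<in> carrier G" "b \<in> carrier G" "z \<in> carrier G"
  shows "z \<otimes> meetL a b = meetL (z \<otimes> a) (z \<otimes> b)"
proof (rule leL_antisym)
  show "z \<otimes> meetL a b \<preceq> meetL (z \<otimes> a) (z \<otimes> b)"
    using assms by (intro meetL_greatest) (auto simp: leL_mult_left_iff meetL_le1 meetL_le2)
  let ?m = "meetL (z \<otimes> a) (z \<otimes> b)"
  have "inv z \<otimes> ?m \<preceq> a" "inv z \<otimes> ?m \<preceq> b"
    using assms meetL_le1[of "z \<otimes> a" "z \<otimes> b"] meetL_le2[of "z \<otimes> a" "z \<otimes> b"]
      leL_mult_left_iff[of "inv z \<otimes> ?m" _ z] by simp_all
  then have "inv z \<otimes> ?m \<preceq> meetL a b"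
    using assms by (intro meetL_greatest) simp_all
  then show "?m \<preceq> z \<otimes> meetL a b"
    using assms leL_mult_left_iff[of "inv z \<otimes> ?m" "meetL a b" z] by simp
qed (use assms in auto)

lemma joinL_mult_left:
  assumes "a \<in> carrier G" "b \<in> carrier G" "z \<in> carrier G"
  shows "z \<otimes> joinL a b = joinL (z \<otimes> a) (z \<otimes> b)"
proof (rule leL_antisym)
  show "joinL (z \<otimes> a) (z \<otimes> b) \<preceq> z \<otimes> joinL a b"
    using assms by (intro joinL_least) (auto simp: leL_mult_left_iff joinL_ge1 joinL_ge2)
  let ?j = "joinL (z \<otimes> a) (z \<otimes> b)"
  have "a \<preceq> inv z \<otimes> ?j" "b \<preceq> inv z \<otimes> ?j"
    using assms joinL_ge1[of "z \<otimes> a" "z \<otimes> b"] joinL_ge2[of "z \<otimes> a" "z \<otimes> b"]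
      leL_mult_left_iff[of _ "inv z \<otimes> ?j" z] by simp_all
  then have "joinL a b \<preceq> inv z \<otimes> ?j"
    using assms by (intro joinL_least) simp_all
  then show "z \<otimes> joinL a b \<preceq> ?j"
    using assms leL_mult_left_iff[of "joinL a b" "inv z \<otimes> ?j" z] by simp
qed (use assms in auto)

lemma meetL_in_M: "a \<in> M \<Longrightarrow> b \<in> M \<Longrightarrow> meetL a b \<in> M"
  using meetL_greatest[of a b \<one>] by (auto simp: one_leL_iff)

lemma joinL_in_M: "a \<in> M \<Longrightarrow> b \<in> M \<Longrightarrow> joinL a b \<in> M"
  using joinL_ge1[of a b] leL_trans[of \<one> a "joinL a b"] by (auto simp: one_leL_iff)

lemma clamp_bounds:
  assumes "x \<in> carrier G" "L \<in> carrier G" "U \<in> carrier G" "L \<preceq> U"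
  shows "L \<preceq> meetL (joinL x L) U" "meetL (joinL x L) U \<preceq> U"
    and "lo \<in> carrier G \<Longrightarrow> lo \<preceq> x \<Longrightarrow> lo \<preceq> U \<Longrightarrow> lo \<preceq> meetL (joinL x L) U"
    and "hi \<in> carrier G \<Longrightarrow> x \<preceq> hi \<Longrightarrow> L \<preceq> hi \<Longrightarrow> meetL (joinL x L) U \<preceq> hi"
proof -
  have j: "joinL x L \<in> carrier G" "x \<preceq> joinL x L" "L \<preceq> joinL x L"
    using assms joinL_ge1 joinL_ge2 by auto
  show "L \<preceq> meetL (joinL x L) U" "meetL (joinL x L) U \<preceq> U"
    using assms j by (auto intro: meetL_greatest meetL_le2)
  show "lo \<preceq> meetL (joinL x L) U" if "lo \<in> carrier G" "lo \<preceq> x" "lo \<preceq> U"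
    using that assms j leL_trans[of lo x "joinL x L"] by (auto intro: meetL_greatest)
  show "meetL (joinL x L) U \<preceq> hi" if "hi \<in> carrier G" "x \<preceq> hi" "L \<preceq> hi"
  proof -
    have "joinL x L \<preceq> hi" using that assms by (intro joinL_least)
    then show ?thesis
      using that assms j meetL_le1[of "joinL x L" U] leL_trans[of _ "joinL x L" hi] by auto
  qed
qed

end

locale garside = lattice_pointed_group +
  fixes \<Delta> :: 'a
  assumes Delta_balanced: "balanced G M \<Delta>"
    and M_generated: "mon_gen G (Div G M \<Delta>) = M"
    and G_generated: "generate G (Div G M \<Delta>) = carrier G"
begin

lemma Delta_closed [simp]: "\<Delta> \<in> carrier G"
  using Delta_balanced by simp

lemma Delta_in_M: "\<Delta> \<in> M"
  using Delta_balanced by (simp add: balanced_def)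

lemma Div_Delta_le: "x \<in> Div G M \<Delta> \<Longrightarrow> x \<preceq> \<Delta>"
  by (simp add: Div_iff)

lemma Delta_pow_in_M: "\<Delta> [^] (n::nat) \<in> M"
  by (induction n) (auto simp: M_mult Delta_in_M)

lemma Delta_pow_add: "\<Delta> [^] (k::nat) \<otimes> \<Delta> [^] l = \<Delta> [^] (k + l)"
  by (simp add: nat_pow_mult)

lemma inv_Delta_pow_add: "inv (\<Delta> [^] (k::nat)) \<otimes> inv (\<Delta> [^] l) = inv (\<Delta> [^] (k + l))"
proof -
  have "inv (\<Delta> [^] (k + l)) = inv (\<Delta> [^] l \<otimes> \<Delta> [^] k)"
    by (simp add: nat_pow_mult add.commute)
  then show ?thesis by (simp add: inv_mult_group)
qed

lemma M_conj_Delta_pow: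
  assumes "m \<in> M"
  shows "inv (\<Delta> [^] (n::nat)) \<otimes> m \<otimes> \<Delta> [^] n \<in> M" "\<Delta> [^] n \<otimes> m \<otimes> inv (\<Delta> [^] n) \<in> M"
  using mon_gen_Div_conj_pow[OF Delta_balanced, of m n] assms M_generated by simp_all

lemma leL_mult_Delta_pow:
  assumes "x \<in> carrier G" "y \<in> carrier G" "x \<preceq> y"
  shows "x \<otimes> \<Delta> [^] (n::nat) \<preceq> y \<otimes> \<Delta> [^] n"
    and "x \<otimes> inv (\<Delta> [^] n) \<preceq> y \<otimes> inv (\<Delta> [^] n)"
proof -
  have "inv (x \<otimes> \<Delta> [^] n) \<otimes> (y \<otimes> \<Delta> [^] n) = inv (\<Delta> [^] n) \<otimes> (inv x \<otimes> y) \<otimes> \<Delta> [^] n"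
    and "inv (x \<otimes> inv (\<Delta> [^] n)) \<otimes> (y \<otimes> inv (\<Delta> [^] n)) = \<Delta> [^] n \<otimes> (inv x \<otimes> y) \<otimes> inv (\<Delta> [^] n)"
    using assms by (simp_all add: inv_mult_group m_assoc)
  with assms M_conj_Delta_pow[of "inv x \<otimes> y" n]
  show "x \<otimes> \<Delta> [^] n \<preceq> y \<otimes> \<Delta> [^] n" "x \<otimes> inv (\<Delta> [^] n) \<preceq> y \<otimes> inv (\<Delta> [^] n)"
    by (simp_all add: leL_iff)
qed

lemma leL_mult_Delta_pow_mono:
  assumes "x \<in> carrier G" "(k::nat) \<le> l"
  shows "x \<otimes> \<Delta> [^] k \<preceq> x \<otimes> \<Delta> [^] l" "x \<otimes> inv (\<Delta> [^] l) \<preceq> x \<otimes> inv (\<Delta> [^] k)"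
proof -
  have "x \<otimes> \<Delta> [^] l = x \<otimes> \<Delta> [^] k \<otimes> \<Delta> [^] (l - k)"
    and "x \<otimes> inv (\<Delta> [^] l) = x \<otimes> inv (\<Delta> [^] k) \<otimes> inv (\<Delta> [^] (l - k))"
    using assms Delta_pow_add[of k "l - k"] inv_Delta_pow_add[of k "l - k"] by (simp_all add: m_assoc)
  with assms Delta_pow_in_M
  show "x \<otimes> \<Delta> [^] k \<preceq> x \<otimes> \<Delta> [^] l" "x \<otimes> inv (\<Delta> [^] l) \<preceq> x \<otimes> inv (\<Delta> [^] k)"
    by (simp_all add: leL_mult_M leL_mult_inv_M)
qed

lemma Delta_le_mult_Delta: "a \<in> M \<Longrightarrow> \<Delta> \<preceq> a \<otimes> \<Delta>"
  using M_conj_Delta_pow(1)[of a 1] by (simp add: leL_iff m_assoc)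

lemma M_le_Delta_pow: "m \<in> M \<Longrightarrow> \<exists>k::nat. m \<preceq> \<Delta> [^] k"
proof -
  have sub: "Div G M \<Delta> \<subseteq> carrier G" by auto
  assume "m \<in> M"
  then have "m \<in> mon_gen G (Div G M \<Delta>)" using M_generated by simp
  from sub this show ?thesis
  proof (induction m rule: mon_gen_induct)
    case one
    show ?case by (auto intro: exI[of _ 0])
  next
    case (mult a y)
    then obtain k :: nat where k: "y \<preceq> \<Delta> [^] k" by auto
    have y: "y \<in> carrier G" using mult M_generated by auto
    have "a \<otimes> y \<preceq> a \<otimes> \<Delta> [^] k" using k y mult by (simp add: leL_mult_left_iff)
    moreover have "a \<otimes> \<Delta> [^] k \<preceq> \<Delta> \<otimes> \<Delta> [^] k"
      using mult leL_mult_Delta_pow(1)[of a \<Delta> k] by (simp add: Div_Delta_le)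
    ultimately have "a \<otimes> y \<preceq> \<Delta> [^] Suc k"
      using y mult leL_trans nat_pow_Suc2[of \<Delta> k] by (simp del: nat_pow_Suc)
    then show ?case by blast
  qed
qed

text \<open>\<open>meetL \<Delta> c\<close> is the left-greedy head of \<open>c\<close>.\<close>

lemma head_in_Div: "c \<in> M \<Longrightarrow> meetL \<Delta> c \<in> Div G M \<Delta>"
  using meetL_in_M[OF Delta_in_M] meetL_le1 by (simp add: Div_iff)

lemma head_mult_le:
  assumes "d \<in> M" "y \<in> M"
  shows "meetL \<Delta> (d \<otimes> y) \<preceq> d \<otimes> meetL \<Delta> y"
proof -
  let ?t = "meetL \<Delta> (d \<otimes> y)"
  have t: "?t \<in> carrier G" "?t \<preceq> \<Delta>" "?t \<preceq> d \<otimes> y"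
    using assms meetL_le1 meetL_le2 M_mult by auto
  have "?t \<preceq> d \<otimes> \<Delta>"
    using t assms Delta_le_mult_Delta leL_trans by auto
  then have "inv d \<otimes> ?t \<preceq> \<Delta>" "inv d \<otimes> ?t \<preceq> y"
    using t assms leL_mult_left_iff[of "inv d \<otimes> ?t" _ d] by simp_all
  then have "inv d \<otimes> ?t \<preceq> meetL \<Delta> y"
    using t assms by (intro meetL_greatest) auto
  then show ?thesis
    using t assms leL_mult_left_iff[of "inv d \<otimes> ?t" "meetL \<Delta> y" d] by simp
qed

lemma tail_le_Delta_pow:
  assumes "c \<in> M" "c \<preceq> \<Delta> [^] Suc k"
  shows "inv (meetL \<Delta> c) \<otimes> c \<preceq> \<Delta> [^] k"
proof -
  let ?t = "meetL \<Delta> c"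
  have c: "c \<in> carrier G" using assms by simp
  have "c \<otimes> inv (\<Delta> [^] k) \<preceq> \<Delta> [^] Suc k \<otimes> inv (\<Delta> [^] k)"
    using leL_mult_Delta_pow(2) assms c by simp
  also have "\<Delta> [^] Suc k \<otimes> inv (\<Delta> [^] k) = \<Delta>"
    using nat_pow_Suc2[of \<Delta> k] by (simp add: m_assoc del: nat_pow_Suc)
  finally have "c \<otimes> inv (\<Delta> [^] k) \<preceq> ?t"
    using c Delta_pow_in_M leL_mult_inv_M by (intro meetL_greatest) auto
  then have "c \<otimes> inv (\<Delta> [^] k) \<otimes> \<Delta> [^] k \<preceq> ?t \<otimes> \<Delta> [^] k"
    using c by (intro leL_mult_Delta_pow(1)) auto
  then have "c \<preceq> ?t \<otimes> \<Delta> [^] k"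
    using c by (simp add: m_assoc)
  then show ?thesis
    using c leL_mult_left_iff[of "inv ?t \<otimes> c" "\<Delta> [^] k" ?t] by simp
qed

lemma Delta_pow_prefix_word:
  assumes "y \<in> M" "y \<preceq> \<Delta> [^] n"
  shows "\<exists>ds. length ds = n \<and> set ds \<subseteq> Div G M \<Delta> \<and> lprod G ds = y"
  using assms
proof (induction n arbitrary: y)
  case 0
  then have "y = \<one>" using leL_one_antisym by simp
  then show ?case by auto
next
  case (Suc n)
  let ?t = "meetL \<Delta> y"
  have t: "?t \<in> Div G M \<Delta>" "?t \<preceq> y" using Suc head_in_Div meetL_le2 by auto
  then have "inv ?t \<otimes> y \<in> M" by (simp add: leL_iff)
  with Suc tail_le_Delta_pow obtain ds
    where "length ds = n" "set ds \<subseteq> Div G M \<Delta>" "lprod G ds = inv ?t \<otimes> y"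
    by blast
  with t Suc.prems show ?case by (intro exI[of _ "?t # ds"]) auto
qed

text \<open>By \<open>wdist_le_iff\<close> below, these intervals describe the balls of the word metric.\<close>

definition Delta_box :: "'a \<Rightarrow> nat \<Rightarrow> nat \<Rightarrow> 'a set" where
  "Delta_box \<alpha> a b = {\<beta> \<in> carrier G. \<alpha> \<otimes> inv (\<Delta> [^] b) \<preceq> \<beta> \<and> \<beta> \<preceq> \<alpha> \<otimes> \<Delta> [^] a}"

lemma Delta_box_self: "\<alpha> \<in> carrier G \<Longrightarrow> \<alpha> \<in> Delta_box \<alpha> a b"
  using leL_mult_Delta_pow_mono[of \<alpha> 0] by (simp add: Delta_box_def)

lemma Delta_box_mult_left:
  assumes "\<alpha> \<in> carrier G" "\<beta> \<in> carrier G" "z \<in> carrier G"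
  shows "z \<otimes> \<beta> \<in> Delta_box (z \<otimes> \<alpha>) a b \<longleftrightarrow> \<beta> \<in> Delta_box \<alpha> a b"
  using assms leL_mult_left_iff[of "\<alpha> \<otimes> inv (\<Delta> [^] b)" \<beta> z] leL_mult_left_iff[of \<beta> "\<alpha> \<otimes> \<Delta> [^] a" z]
  by (simp add: Delta_box_def m_assoc)

lemma Delta_box_swap:
  assumes "\<beta> \<in> Delta_box \<alpha> a b" "\<alpha> \<in> carrier G"
  shows "\<alpha> \<in> Delta_box \<beta> b a"
proof -
  have \<beta>: "\<beta> \<in> carrier G" using assms by (simp add: Delta_box_def)
  have "\<alpha> \<otimes> inv (\<Delta> [^] b) \<otimes> \<Delta> [^] b \<preceq> \<beta> \<otimes> \<Delta> [^] b"
    "\<beta> \<otimes> inv (\<Delta> [^] a) \<preceq> \<alpha> \<otimes> \<Delta> [^] a \<otimes> inv (\<Delta> [^] a)"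
    using assms \<beta> leL_mult_Delta_pow by (auto simp: Delta_box_def)
  with assms \<beta> show ?thesis by (simp add: Delta_box_def m_assoc)
qed

lemma Delta_box_trans:
  assumes "\<beta> \<in> Delta_box \<alpha> a b" "\<gamma> \<in> Delta_box \<beta> c d" "\<alpha> \<in> carrier G"
  shows "\<gamma> \<in> Delta_box \<alpha> (a + c) (b + d)"
proof -
  have \<beta>\<gamma>: "\<beta> \<in> carrier G" "\<gamma> \<in> carrier G" using assms by (auto simp: Delta_box_def)
  have "\<beta> \<otimes> \<Delta> [^] c \<preceq> \<alpha> \<otimes> \<Delta> [^] a \<otimes> \<Delta> [^] c"
    "\<alpha> \<otimes> inv (\<Delta> [^] b) \<otimes> inv (\<Delta> [^] d) \<preceq> \<beta> \<otimes> inv (\<Delta> [^] d)"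
    using assms \<beta>\<gamma> leL_mult_Delta_pow by (auto simp: Delta_box_def)
  then have "\<beta> \<otimes> \<Delta> [^] c \<preceq> \<alpha> \<otimes> \<Delta> [^] (a + c)"
    "\<alpha> \<otimes> inv (\<Delta> [^] (b + d)) \<preceq> \<beta> \<otimes> inv (\<Delta> [^] d)"
    using assms(3) by (simp_all add: m_assoc Delta_pow_add inv_Delta_pow_add)
  with assms \<beta>\<gamma> show ?thesis
    by (auto simp: Delta_box_def intro: leL_trans)
qed

abbreviation simples :: "'a set" where
  "simples \<equiv> Div G M \<Delta> - {\<one>}"

abbreviation letters :: "'a set" where
  "letters \<equiv> simples \<union> (\<lambda>s. inv s) ` simples"

lemma letter_Delta_box:
  assumes "l \<in> letters"
  shows "\<exists>a b. a + b \<le> 1 \<and> l \<in> Delta_box \<one> a b"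
proof (cases "l \<in> simples")
  case True
  then have "l \<in> Delta_box \<one> 1 0"
    by (simp add: Delta_box_def Div_iff leL_iff)
  then show ?thesis by (intro exI[of _ 1] exI[of _ 0]) auto
next
  case False
  with assms obtain s where s: "s \<in> Div G M \<Delta>" "l = inv s" by auto
  then have "l \<in> Delta_box \<one> 0 1"
    using Div_right_complement_in_M[OF Delta_balanced s(1)] by (simp add: Delta_box_def leL_iff Div_iff)
  then show ?thesis by (intro exI[of _ 0] exI[of _ 1]) auto
qed

lemma word_Delta_box:
  "set xs \<subseteq> letters \<Longrightarrow> \<exists>a b. a + b \<le> length xs \<and> lprod G xs \<in> Delta_box \<one> a b"
proof (induction xs)
  case Nil
  show ?case using Delta_box_self[of \<one>] by auto
next
  case (Cons l xs)
  then obtain a b where ab: "a + b \<le> length xs" "lprod G xs \<in> Delta_box \<one> a b" by auto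
  have "l \<in> letters" using Cons.prems by simp
  then obtain c d where cd: "c + d \<le> 1" "l \<in> Delta_box \<one> c d"
    using letter_Delta_box by blast
  have l: "l \<in> carrier G" "set xs \<subseteq> carrier G"
    using Cons.prems by auto
  then have "l \<otimes> lprod G xs \<in> Delta_box l a b"
    using Delta_box_mult_left[of \<one> "lprod G xs" l] ab by simp
  with cd l have "l \<otimes> lprod G xs \<in> Delta_box \<one> (c + a) (d + b)"
    by (intro Delta_box_trans) auto
  with ab cd show ?case by (intro exI[of _ "c + a"] exI[of _ "d + b"]) auto
qed

lemma drop_ones_word:
  assumes "set xs \<subseteq> Div G M \<Delta> \<union> (\<lambda>s. inv s) ` Div G M \<Delta>"
  shows "set (filter (\<lambda>x. x \<noteq> \<one>) xs) \<subseteq> letters \<and> lprod G (filter (\<lambda>x. x \<noteq> \<one>) xs) = lprod G xs"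
proof -
  have "set xs \<subseteq> carrier G" using assms by auto
  with assms show ?thesis by (induction xs) auto
qed

lemma wlen_le_length:
  assumes "set xs \<subseteq> Div G M \<Delta> \<union> (\<lambda>s. inv s) ` Div G M \<Delta>"
  shows "wlen G simples (lprod G xs) \<le> length xs"
proof -
  have "wlen G simples (lprod G xs) \<le> length (filter (\<lambda>x. x \<noteq> \<one>) xs)"
    unfolding wlen_def using drop_ones_word[OF assms]
    by (intro Least_le exI[of _ "filter (\<lambda>x. x \<noteq> \<one>) xs"]) auto
  then show ?thesis
    using length_filter_le[of "\<lambda>x. x \<noteq> \<one>" xs] by (rule order_trans)
qed

lemma inv_Delta_pow_word:
  "set ds \<subseteq> Div G M \<Delta> \<Longrightarrow> \<exists>ys. length ys = length ds \<and> set ys \<subseteq> (\<lambda>s. inv s) ` Div G M \<Delta>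
     \<and> lprod G ys = inv (\<Delta> [^] length ds) \<otimes> lprod G ds"
proof (induction ds)
  case Nil
  then show ?case by simp
next
  case (Cons d ds)
  let ?n = "length ds"
  obtain ys where ys: "length ys = ?n" "set ys \<subseteq> (\<lambda>s. inv s) ` Div G M \<Delta>"
    "lprod G ys = inv (\<Delta> [^] ?n) \<otimes> lprod G ds"
    using Cons by auto
  have d: "d \<in> Div G M \<Delta>" "set ds \<subseteq> carrier G" using Cons.prems by auto
  define s where "s = inv (\<Delta> [^] ?n) \<otimes> (inv d \<otimes> \<Delta>) \<otimes> \<Delta> [^] ?n"
  have s: "s \<in> Div G M \<Delta>"
    using Div_conj_pow[OF Delta_balanced Div_left_complement[OF Delta_balanced d(1)]] s_def by blast
  have "inv (\<Delta> [^] Suc ?n) \<otimes> (d \<otimes> lprod G ds) = inv s \<otimes> (inv (\<Delta> [^] ?n) \<otimes> lprod G ds)"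
    using d nat_pow_Suc2[of \<Delta> ?n] unfolding s_def
    by (simp add: inv_mult_group m_assoc del: nat_pow_Suc)
  with ys s show ?case by (intro exI[of _ "inv s # ys"]) auto
qed

lemma Delta_box_wlen:
  assumes "x \<in> Delta_box \<one> a b"
  shows "wlen G simples x \<le> a + b"
proof -
  have x: "x \<in> carrier G" using assms by (simp add: Delta_box_def)
  have "\<one> \<preceq> \<Delta> [^] b \<otimes> x" "\<Delta> [^] b \<otimes> x \<preceq> \<Delta> [^] b \<otimes> \<Delta> [^] a"
    using assms x leL_mult_left_iff[of "inv (\<Delta> [^] b)" x "\<Delta> [^] b"]
      leL_mult_left_iff[of x "\<Delta> [^] a" "\<Delta> [^] b"]
    by (simp_all add: Delta_box_def)
  then have "\<Delta> [^] b \<otimes> x \<in> M" "\<Delta> [^] b \<otimes> x \<preceq> \<Delta> [^] (b + a)"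
    using x by (simp_all add: one_leL_iff Delta_pow_add)
  then obtain ds where ds: "length ds = b + a" "set ds \<subseteq> Div G M \<Delta>" "lprod G ds = \<Delta> [^] b \<otimes> x"
    using Delta_pow_prefix_word by blast
  have sub: "set (take b ds) \<subseteq> Div G M \<Delta>" "set (drop b ds) \<subseteq> Div G M \<Delta>"
    using ds(2) set_take_subset set_drop_subset by fastforce+
  then obtain ys where ys: "length ys = b" "set ys \<subseteq> (\<lambda>s. inv s) ` Div G M \<Delta>"
    "lprod G ys = inv (\<Delta> [^] b) \<otimes> lprod G (take b ds)"
    using inv_Delta_pow_word[of "take b ds"] ds(1) by auto
  have car: "set (take b ds) \<subseteq> carrier G" "set (drop b ds) \<subseteq> carrier G" "set ys \<subseteq> carrier G"
    using sub ys(2) by auto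
  have "x = inv (\<Delta> [^] b) \<otimes> lprod G ds"
    using ds(3) x by simp
  also have "\<dots> = lprod G (ys @ drop b ds)"
    using car ys(3) lprod_append[of "take b ds" "drop b ds"] lprod_append[of ys "drop b ds"]
    by (simp add: m_assoc)
  finally have "wlen G simples x \<le> length (ys @ drop b ds)"
    using wlen_le_length[of "ys @ drop b ds"] ys(2) sub(2) by auto
  with ys(1) ds(1) show ?thesis by simp
qed

lemma generated_word:
  assumes "x \<in> carrier G"
  shows "\<exists>xs. set xs \<subseteq> letters \<and> lprod G xs = x"
proof -
  have "x \<in> generate G (Div G M \<Delta>)" using assms G_generated by simp
  then have "\<exists>xs. set xs \<subseteq> Div G M \<Delta> \<union> (\<lambda>s. inv s) ` Div G M \<Delta> \<and> lprod G xs = x"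
  proof (induction x rule: generate.induct)
    case one
    then show ?case by (intro exI[of _ "[]"]) simp
  next
    case (incl h)
    then show ?case by (intro exI[of _ "[h]"]) simp
  next
    case (inv h)
    then show ?case by (intro exI[of _ "[inv h]"]) simp
  next
    case (eng h1 h2)
    then obtain xs ys where "set xs \<subseteq> Div G M \<Delta> \<union> (\<lambda>s. inv s) ` Div G M \<Delta>" "lprod G xs = h1"
      "set ys \<subseteq> Div G M \<Delta> \<union> (\<lambda>s. inv s) ` Div G M \<Delta>" "lprod G ys = h2"
      by blast
    moreover have "set xs \<subseteq> carrier G" "set ys \<subseteq> carrier G"
      using calculation by auto
    ultimately show ?case by (intro exI[of _ "xs @ ys"]) (auto simp: lprod_append)
  qed
  then show ?thesis using drop_ones_word by blast
qed

lemma wlen_Delta_box: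
  assumes "x \<in> carrier G"
  shows "\<exists>a b. a + b \<le> wlen G simples x \<and> x \<in> Delta_box \<one> a b"
proof -
  obtain ys where "set ys \<subseteq> letters" "lprod G ys = x"
    using generated_word[OF assms] by blast
  then have "\<exists>n xs. length xs = n \<and> set xs \<subseteq> letters \<and> lprod G xs = x" by blast
  then have "\<exists>xs. length xs = wlen G simples x \<and> set xs \<subseteq> letters \<and> lprod G xs = x"
    unfolding wlen_def by (rule LeastI_ex)
  then show ?thesis
    using word_Delta_box by fastforce
qed

lemma Delta_box_translate:
  assumes "\<alpha> \<in> carrier G" "\<beta> \<in> carrier G"
  shows "\<beta> \<in> Delta_box \<alpha> a b \<longleftrightarrow> inv \<alpha> \<otimes> \<beta> \<in> Delta_box \<one> a b"
  using Delta_box_mult_left[of \<alpha> \<beta> "inv \<alpha>" a b] assms by simp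

lemma wdist_le_iff:
  assumes "\<alpha> \<in> carrier G" "\<beta> \<in> carrier G"
  shows "wdist G simples \<alpha> \<beta> \<le> n \<longleftrightarrow> (\<exists>a b. a + b \<le> n \<and> \<beta> \<in> Delta_box \<alpha> a b)"
proof
  assume "wdist G simples \<alpha> \<beta> \<le> n"
  with wlen_Delta_box[of "inv \<alpha> \<otimes> \<beta>"] assms show "\<exists>a b. a + b \<le> n \<and> \<beta> \<in> Delta_box \<alpha> a b"
    unfolding wdist_def Delta_box_translate[OF assms] by force
next
  assume "\<exists>a b. a + b \<le> n \<and> \<beta> \<in> Delta_box \<alpha> a b"
  with Delta_box_wlen assms show "wdist G simples \<alpha> \<beta> \<le> n"
    unfolding wdist_def Delta_box_translate[OF assms] by force
qed

lemma wdist_triangle: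
  assumes "\<alpha> \<in> carrier G" "\<beta> \<in> carrier G" "\<gamma> \<in> carrier G"
  shows "wdist G simples \<alpha> \<gamma> \<le> wdist G simples \<alpha> \<beta> + wdist G simples \<beta> \<gamma>"
proof -
  obtain a b c d where ab: "a + b \<le> wdist G simples \<alpha> \<beta>" "\<beta> \<in> Delta_box \<alpha> a b"
    and cd: "c + d \<le> wdist G simples \<beta> \<gamma>" "\<gamma> \<in> Delta_box \<beta> c d"
    using wdist_le_iff assms by (meson order_refl)
  have "\<gamma> \<in> Delta_box \<alpha> (a + c) (b + d)"
    using ab(2) cd(2) assms(1) by (rule Delta_box_trans)
  then have "wdist G simples \<alpha> \<gamma> \<le> (a + c) + (b + d)"
    using wdist_le_iff[of \<alpha> \<gamma>] assms by blast
  with ab cd show ?thesis by linarith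
qed

end

locale parabolic = garside +
  fixes H N :: "'a set" and \<delta> :: 'a
  assumes delta_balanced: "balanced G M \<delta>"
    and H_eq: "H = generate G (Div G M \<delta>)"
    and N_eq: "N = mon_gen G (Div G M \<delta>)"
    and Div_delta_eq: "Div G M \<delta> = Div G M \<Delta> \<inter> N"
begin

lemma delta_closed [simp]: "\<delta> \<in> carrier G"
  using delta_balanced by simp

lemma Div_delta_subset: "x \<in> Div G M \<delta> \<Longrightarrow> x \<in> N \<and> x \<in> Div G M \<Delta>"
  using Div_delta_eq by auto

lemma N_induct [consumes 1, case_names one mult]:
  assumes "n \<in> N" "P \<one>"
    and "\<And>d y. d \<in> Div G M \<delta> \<Longrightarrow> y \<in> N \<Longrightarrow> P y \<Longrightarrow> P (d \<otimes> y)"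
  shows "P n"
proof -
  have "Div G M \<delta> \<subseteq> carrier G" by auto
  from this assms(1)[unfolded N_eq] show ?thesis
    by (induction n rule: mon_gen_induct) (use assms(2,3) N_eq in auto)
qed

lemma N_subset_M: "n \<in> N \<Longrightarrow> n \<in> M"
  by (induction n rule: N_induct) (auto simp: M_mult Div_iff)

lemma N_closed [simp]: "n \<in> N \<Longrightarrow> n \<in> carrier G"
  using N_subset_M by simp

lemma one_in_N: "\<one> \<in> N"
  using N_eq mon_gen_one by simp

lemma N_mult:
  assumes "x \<in> N" "y \<in> N"
  shows "x \<otimes> y \<in> N"
proof -
  have "Div G M \<delta> \<subseteq> carrier G" by auto
  from mon_gen_mult[OF this] assms show ?thesis by (simp add: N_eq)
qed

lemma delta_in_N: "\<delta> \<in> N"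
  using Div_delta_subset balanced_in_Div[OF delta_balanced] by blast

lemma delta_pow_in_N: "\<delta> [^] (n::nat) \<in> N"
  by (induction n) (auto simp: one_in_N N_mult delta_in_N)

lemma N_conj_delta_pow:
  "n \<in> N \<Longrightarrow> inv (\<delta> [^] (k::nat)) \<otimes> n \<otimes> \<delta> [^] k \<in> N \<and> \<delta> [^] k \<otimes> n \<otimes> inv (\<delta> [^] k) \<in> N"
  using mon_gen_Div_conj_pow[OF delta_balanced, of n k] N_eq by simp

lemma head_of_N_in_Div_delta:
  assumes "n \<in> N"
  shows "meetL \<Delta> n \<in> Div G M \<delta>"
  using assms
proof (induction n rule: N_induct)
  case one
  have "meetL \<Delta> \<one> = \<one>"
    using meetL_le2[of \<Delta> \<one>] Delta_in_M by (intro leL_one_antisym meetL_in_M) auto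
  then show ?case using one_in_Div[OF delta_balanced] by simp
next
  case (mult d y)
  let ?e = "meetL \<Delta> y" and ?t = "meetL \<Delta> (d \<otimes> y)"
  have d: "d \<in> carrier G" "d \<in> M" "d \<in> N" "d \<preceq> \<Delta>"
    using mult Div_delta_subset by (auto simp: Div_iff)
  have y: "y \<in> carrier G" "y \<in> M" using mult N_subset_M by auto
  have t: "?t \<in> carrier G" "?t \<in> M" "?t \<preceq> \<Delta>"
    using d y meetL_le1 meetL_in_M Delta_in_M M_mult by auto
  have t_le: "?t \<preceq> d \<otimes> ?e"
    using head_mult_le d y by simp
  let ?j = "joinL ?t d"
  have j: "?j \<in> carrier G" "?j \<in> M" "?t \<preceq> ?j" "d \<preceq> ?j"
    using t d joinL_ge1 joinL_ge2 joinL_in_M by auto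
  have "?j \<preceq> d \<otimes> ?e"
    using t_le d t mult leL_mult_M[of d ?e] by (intro joinL_least) (auto simp: Div_iff)
  then have "inv d \<otimes> ?j \<preceq> ?e"
    using d j mult leL_mult_left_iff[of "inv d \<otimes> ?j" ?e d] by simp
  moreover have "inv d \<otimes> ?j \<in> M"
    using j(4) by (simp add: leL_iff)
  ultimately have "inv d \<otimes> ?j \<in> Div G M \<delta>"
    using mult.IH Div_prefix_closed[of "inv d \<otimes> ?j" ?e \<delta>] by simp
  then have "d \<otimes> (inv d \<otimes> ?j) \<in> N"
    using d Div_delta_subset N_mult by blast
  moreover have "?j \<preceq> \<Delta>"
    using t d by (intro joinL_least) auto
  ultimately have "?j \<in> Div G M \<delta>"
    using d j Div_delta_eq by (simp add: Div_iff)
  with t(2) j(3) show ?case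
    using Div_prefix_closed[of ?t ?j \<delta>] by simp
qed

lemma N_left_quotient:
  assumes "n \<in> N" "e \<in> Div G M \<delta>" "e \<preceq> n"
  shows "inv e \<otimes> n \<in> N"
  using assms
proof (induction n arbitrary: e rule: N_induct)
  case one
  then have "e = \<one>"
    by (intro leL_one_antisym) (auto simp: Div_iff)
  then show ?case using one_in_N by simp
next
  case (mult d y)
  have d: "d \<in> carrier G" "d \<in> M" "d \<preceq> \<Delta>" and y: "y \<in> carrier G" "y \<in> M"
    and e: "e \<in> carrier G" "e \<in> M" "e \<preceq> \<Delta>"
    using mult Div_delta_subset N_subset_M by (auto simp: Div_iff)
  let ?j = "joinL e d"
  have j: "?j \<in> carrier G" "?j \<in> M" "e \<preceq> ?j" "d \<preceq> ?j"
    using d e joinL_ge1 joinL_ge2 joinL_in_M by auto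
  have j_le: "?j \<preceq> d \<otimes> y"
    using mult d e y leL_mult_M by (intro joinL_least) auto
  have "?j \<preceq> \<Delta>"
    using d e by (intro joinL_least) auto
  with j_le have "?j \<preceq> meetL \<Delta> (d \<otimes> y)"
    using d y j by (intro meetL_greatest) auto
  moreover have "meetL \<Delta> (d \<otimes> y) \<in> Div G M \<delta>"
    using mult Div_delta_subset by (intro head_of_N_in_Div_delta N_mult) auto
  ultimately have j_Div: "?j \<in> Div G M \<delta>"
    using j(2) Div_prefix_closed[of ?j "meetL \<Delta> (d \<otimes> y)" \<delta>] by simp
  have "inv d \<otimes> ?j \<preceq> y"
    using d y j j_le leL_mult_left_iff[of "inv d \<otimes> ?j" y d] by simp
  then have "inv (inv d \<otimes> ?j) \<otimes> y \<in> N"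
    using mult Div_left_quotient[OF delta_balanced d(2) j(4) j_Div] by blast
  moreover have "inv e \<otimes> ?j \<in> N"
    using Div_left_quotient[OF delta_balanced e(2) j(3) j_Div] Div_delta_subset by blast
  moreover have "inv e \<otimes> (d \<otimes> y) = (inv e \<otimes> ?j) \<otimes> (inv (inv d \<otimes> ?j) \<otimes> y)"
    using d e j y by (simp add: inv_mult_group m_assoc)
  ultimately show ?case using N_mult by simp
qed

text \<open>Induction on \<open>k\<close> with \<open>c \<preceq> \<Delta> [^] k\<close>, peeling off the left-greedy head of \<open>c\<close>.\<close>

lemma N_prefix_closed:
  assumes "c \<in> M" "n \<in> N" "c \<preceq> n"
  shows "c \<in> N"
proof -
  obtain k :: nat where "c \<preceq> \<Delta> [^] k" using M_le_Delta_pow assms(1) by blast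
  with assms show ?thesis
  proof (induction k arbitrary: c n)
    case 0
    then have "c = \<one>" using leL_one_antisym by simp
    then show ?case using one_in_N by simp
  next
    case (Suc k)
    let ?t = "meetL \<Delta> c"
    have c: "c \<in> carrier G" "n \<in> carrier G" using Suc.prems by auto
    have t: "?t \<in> carrier G" "?t \<in> M" "?t \<preceq> c"
      using Suc.prems meetL_le2 meetL_in_M Delta_in_M by auto
    have "?t \<preceq> meetL \<Delta> n"
      using t c Suc.prems meetL_le1[of \<Delta> c] leL_trans[of ?t c n] by (intro meetL_greatest) auto
    then have t_Div: "?t \<in> Div G M \<delta>"
      using t(2) head_of_N_in_Div_delta[OF Suc.prems(2)] Div_prefix_closed[of ?t "meetL \<Delta> n" \<delta>]
      by simp
    have "inv ?t \<otimes> c \<preceq> inv ?t \<otimes> n"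
      using t c Suc.prems by (simp add: leL_mult_left_iff)
    moreover have "inv ?t \<otimes> n \<in> N"
      using N_left_quotient[OF Suc.prems(2) t_Div] t c Suc.prems leL_trans[of ?t c n] by simp
    moreover have "inv ?t \<otimes> c \<in> M"
      using t(3) by (simp add: leL_iff)
    moreover have "inv ?t \<otimes> c \<preceq> \<Delta> [^] k"
      using Suc.prems tail_le_Delta_pow by simp
    ultimately have "inv ?t \<otimes> c \<in> N" using Suc.IH by blast
    then have "?t \<otimes> (inv ?t \<otimes> c) \<in> N"
      using t_Div Div_delta_subset N_mult by blast
    with t c show ?case by simp
  qed
qed

lemma H_subgroup: "subgroup H G"
proof -
  have "Div G M \<delta> \<subseteq> carrier G" by auto
  then show ?thesis using generate_is_subgroup H_eq by simp
qed

lemma H_closed [simp]: "x \<in> H \<Longrightarrow> x \<in> carrier G"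
  using subgroup.subset[OF H_subgroup] by auto

lemma H_mult: "x \<in> H \<Longrightarrow> y \<in> H \<Longrightarrow> x \<otimes> y \<in> H"
  using subgroup.m_closed[OF H_subgroup] by auto

lemma H_inv: "x \<in> H \<Longrightarrow> inv x \<in> H"
  using subgroup.m_inv_closed[OF H_subgroup] by auto

lemma N_subset_H: "n \<in> N \<Longrightarrow> n \<in> H"
proof (induction n rule: N_induct)
  case one
  then show ?case using subgroup.one_closed[OF H_subgroup] by simp
next
  case (mult d y)
  then show ?case using H_mult H_eq generate.incl[of d "Div G M \<delta>" G] by auto
qed

lemma H_elem_eq_inv_delta_pow_mult_N:
  assumes "h \<in> H"
  shows "\<exists>(k::nat) n. n \<in> N \<and> h = inv (\<delta> [^] k) \<otimes> n"
  using assms[unfolded H_eq]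
proof (induction h rule: generate.induct)
  case one
  then show ?case using one_in_N by (intro exI[of _ 0] exI[of _ \<one>]) auto
next
  case (incl h)
  then show ?case using Div_delta_subset by (intro exI[of _ 0] exI[of _ h]) auto
next
  case (inv h)
  have "\<delta> \<otimes> inv h \<in> N"
    using Div_right_complement[OF delta_balanced inv] Div_delta_subset by blast
  moreover have "inv h = inv (\<delta> [^] (1::nat)) \<otimes> (\<delta> \<otimes> inv h)"
    using inv by (simp add: m_assoc[symmetric])
  ultimately show ?case by blast
next
  case (eng h1 h2)
  then obtain k l :: nat and n m where nm: "n \<in> N" "h1 = inv (\<delta> [^] k) \<otimes> n"
    "m \<in> N" "h2 = inv (\<delta> [^] l) \<otimes> m"
    by blast
  have "h1 \<otimes> h2 = inv (\<delta> [^] (l + k)) \<otimes> ((\<delta> [^] l \<otimes> n \<otimes> inv (\<delta> [^] l)) \<otimes> m)"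
    using nm by (simp add: nat_pow_mult[symmetric] inv_mult_group m_assoc)
  moreover have "(\<delta> [^] l \<otimes> n \<otimes> inv (\<delta> [^] l)) \<otimes> m \<in> N"
    using N_conj_delta_pow[OF nm(1)] nm(3) N_mult by blast
  ultimately show ?case by blast
qed

lemma N_le_delta_pow: "n \<in> N \<Longrightarrow> \<exists>l::nat. n \<preceq> \<delta> [^] l"
proof (induction n rule: N_induct)
  case one
  then show ?case by (intro exI[of _ 0]) simp
next
  case (mult d y)
  then obtain l :: nat where l: "y \<preceq> \<delta> [^] l" by auto
  have d: "d \<in> carrier G" using mult by simp
  have "inv (\<delta> [^] l) \<otimes> (inv d \<otimes> \<delta>) \<otimes> \<delta> [^] l \<in> M"
    using N_conj_delta_pow Div_left_complement[OF delta_balanced mult(1)] Div_delta_subset N_subset_M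
    by blast
  moreover have "inv (d \<otimes> \<delta> [^] l) \<otimes> (\<delta> \<otimes> \<delta> [^] l) = inv (\<delta> [^] l) \<otimes> (inv d \<otimes> \<delta>) \<otimes> \<delta> [^] l"
    using d by (simp add: inv_mult_group m_assoc)
  ultimately have "d \<otimes> \<delta> [^] l \<preceq> \<delta> [^] Suc l"
    using nat_pow_Suc2[of \<delta> l] by (simp add: leL_iff del: nat_pow_Suc)
  moreover have "d \<otimes> y \<preceq> d \<otimes> \<delta> [^] l"
    using l d mult by (simp add: leL_mult_left_iff)
  ultimately have "d \<otimes> y \<preceq> \<delta> [^] Suc l"
    using d mult leL_trans by simp
  then show ?case by blast
qed

lemma H_bounded:
  assumes "h \<in> H"
  shows "\<exists>k::nat. inv (\<delta> [^] k) \<preceq> h \<and> h \<preceq> \<delta> [^] k"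
proof -
  obtain k :: nat and n where n: "n \<in> N" "h = inv (\<delta> [^] k) \<otimes> n"
    using H_elem_eq_inv_delta_pow_mult_N assms by blast
  obtain l :: nat where l: "n \<preceq> \<delta> [^] l"
    using N_le_delta_pow n(1) by blast
  have \<delta>M: "\<delta> \<in> M" using delta_in_N N_subset_M by simp
  have "\<delta> [^] (l + k) \<otimes> inv (\<delta> [^] k) \<otimes> n = \<delta> [^] l \<otimes> n"
    using n by (simp add: nat_pow_mult[symmetric] m_assoc)
  then have lower: "inv (\<delta> [^] (l + k)) \<preceq> h"
    using n \<delta>M delta_pow_in_N N_subset_M by (simp add: leL_iff m_assoc M_mult)
  have "n \<preceq> \<delta> [^] (l + (k + k))"
    using l n pow_leL_pow_add[OF \<delta>M, of l "k + k"] leL_trans by simp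
  moreover have "\<delta> [^] k \<otimes> h = n" "\<delta> [^] k \<otimes> \<delta> [^] (l + k) = \<delta> [^] (l + (k + k))"
    using n by (simp_all add: nat_pow_mult add.commute add.left_commute)
  ultimately have upper: "h \<preceq> \<delta> [^] (l + k)"
    using n leL_mult_left_iff[of h "\<delta> [^] (l + k)" "\<delta> [^] k"] by simp
  from lower upper show ?thesis by blast
qed

lemma H_inter_M_eq_N: "h \<in> H \<Longrightarrow> h \<in> M \<Longrightarrow> h \<in> N"
  using H_bounded N_prefix_closed delta_pow_in_N by blast

lemma H_convex:
  assumes "h \<in> H" "x \<in> H" "m \<in> carrier G" "h \<preceq> m" "m \<preceq> x"
  shows "m \<in> H"
proof -
  have "inv h \<otimes> m \<preceq> inv h \<otimes> x"
    using assms by (simp add: leL_mult_left_iff)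
  moreover have "inv h \<otimes> x \<in> N"
    using assms leL_trans[of h m x] H_inter_M_eq_N H_mult H_inv by (simp add: leL_iff)
  moreover have "inv h \<otimes> m \<in> M"
    using assms(4) by (simp add: leL_iff)
  ultimately have "h \<otimes> (inv h \<otimes> m) \<in> H"
    using N_prefix_closed N_subset_H H_mult assms(1) by blast
  with assms show ?thesis by simp
qed

lemma H_meetL_joinL_one:
  assumes "y \<in> H"
  shows "meetL \<one> y \<in> H" "joinL \<one> y \<in> H"
proof -
  obtain k :: nat where k: "inv (\<delta> [^] k) \<preceq> y" "y \<preceq> \<delta> [^] k"
    using H_bounded assms by blast
  have "inv (\<delta> [^] k) \<preceq> \<one>" "\<one> \<preceq> \<delta> [^] k"
    using delta_pow_in_N N_subset_M by (simp_all add: leL_iff)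
  then have "inv (\<delta> [^] k) \<preceq> meetL \<one> y" "joinL \<one> y \<preceq> \<delta> [^] k"
    using k assms by (auto intro: meetL_greatest joinL_least)
  moreover have "inv (\<delta> [^] k) \<in> H" "\<delta> [^] k \<in> H"
    using delta_pow_in_N N_subset_H H_inv by auto
  moreover have "\<one> \<in> H" "meetL \<one> y \<preceq> \<one>" "\<one> \<preceq> joinL \<one> y"
    using subgroup.one_closed[OF H_subgroup] assms meetL_le1 joinL_ge1 by auto
  ultimately show "meetL \<one> y \<in> H" "joinL \<one> y \<in> H"
    using assms H_convex[of "inv (\<delta> [^] k)" \<one> "meetL \<one> y"] H_convex[of \<one> "\<delta> [^] k" "joinL \<one> y"]
    by simp_all
qed

lemma H_meetL_joinL:
  assumes "x \<in> H" "y \<in> H"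
  shows "meetL x y \<in> H" "joinL x y \<in> H"
proof -
  have "meetL x y = x \<otimes> meetL \<one> (inv x \<otimes> y)" "joinL x y = x \<otimes> joinL \<one> (inv x \<otimes> y)"
    using assms meetL_mult_left[of \<one> "inv x \<otimes> y" x] joinL_mult_left[of \<one> "inv x \<otimes> y" x] by simp_all
  with assms H_meetL_joinL_one[of "inv x \<otimes> y"] H_mult H_inv
  show "meetL x y \<in> H" "joinL x y \<in> H" by simp_all
qed

lemma inv_Delta_le_inv_delta: "inv \<Delta> \<preceq> inv \<delta>"
  using Div_right_complement_in_M[OF Delta_balanced] Div_delta_subset[OF balanced_in_Div[OF delta_balanced]]
  by (simp add: leL_iff)

lemma H_mult_inv_delta_le:
  assumes "x \<in> H" "h \<in> H" "g \<in> carrier G" "h \<preceq> g" "x \<preceq> g \<otimes> \<Delta>"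
  shows "x \<otimes> inv \<delta> \<preceq> g"
proof -
  let ?m = "meetL g x" and ?hx = "meetL h x"
  have x: "x \<in> carrier G" "h \<in> carrier G" using assms by auto
  have m: "?m \<in> carrier G" "?m \<preceq> g" "?m \<preceq> x" using x assms meetL_le1 meetL_le2 by auto
  have hx: "?hx \<in> H" "?hx \<preceq> h" "?hx \<preceq> x"
    using assms x H_meetL_joinL meetL_le1 meetL_le2 by auto
  then have "?hx \<preceq> ?m"
    using x assms leL_trans[of ?hx h g] by (intro meetL_greatest) auto
  with hx m assms(1) have mH: "?m \<in> H"
    using H_convex[of ?hx x ?m] by simp
  have "x \<otimes> inv \<Delta> \<preceq> g \<otimes> \<Delta> \<otimes> inv \<Delta>"
    using leL_mult_Delta_pow(2)[of x "g \<otimes> \<Delta>" 1] assms x by simp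
  then have "x \<otimes> inv \<Delta> \<preceq> ?m"
    using assms x Delta_in_M leL_mult_inv_M by (intro meetL_greatest) (auto simp: m_assoc)
  then have "x \<otimes> inv \<Delta> \<otimes> \<Delta> \<preceq> ?m \<otimes> \<Delta>"
    using leL_mult_Delta_pow(1)[of "x \<otimes> inv \<Delta>" ?m 1] x m by simp
  then have "inv ?m \<otimes> x \<preceq> \<Delta>"
    using x m leL_mult_left_iff[of "inv ?m \<otimes> x" \<Delta> ?m] by (simp add: m_assoc)
  moreover have "inv ?m \<otimes> x \<in> N"
    using m mH assms H_inter_M_eq_N H_mult H_inv by (simp add: leL_iff)
  ultimately have "inv ?m \<otimes> x \<in> Div G M \<delta>"
    using Div_delta_eq N_subset_M by (simp add: Div_iff)
  then have "\<delta> \<otimes> inv (inv ?m \<otimes> x) \<in> M"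
    using Div_right_complement_in_M[OF delta_balanced] by blast
  then have "x \<otimes> inv \<delta> \<preceq> ?m"
    using x m by (simp add: leL_iff inv_mult_group m_assoc)
  with m x assms(3) show ?thesis using leL_trans[of "x \<otimes> inv \<delta>" ?m g] by simp
qed

lemma le_H_mult_delta:
  assumes "x \<in> H" "h \<in> H" "g \<in> carrier G" "g \<preceq> h" "g \<otimes> inv \<Delta> \<preceq> x"
  shows "g \<preceq> x \<otimes> \<delta>"
proof -
  let ?j = "joinL g x" and ?hx = "joinL h x"
  have x: "x \<in> carrier G" "h \<in> carrier G" using assms by auto
  have j: "?j \<in> carrier G" "g \<preceq> ?j" "x \<preceq> ?j" using x assms joinL_ge1 joinL_ge2 by auto
  have hx: "?hx \<in> H" "h \<preceq> ?hx" "x \<preceq> ?hx"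
    using assms x H_meetL_joinL joinL_ge1 joinL_ge2 by auto
  then have "?j \<preceq> ?hx"
    using x assms leL_trans[of g h ?hx] by (intro joinL_least) auto
  with hx j assms(1) have jH: "?j \<in> H"
    using H_convex[of x ?hx ?j] by simp
  have "g \<otimes> inv \<Delta> \<otimes> \<Delta> \<preceq> x \<otimes> \<Delta>"
    using leL_mult_Delta_pow(1)[of "g \<otimes> inv \<Delta>" x 1] assms x by simp
  then have "?j \<preceq> x \<otimes> \<Delta>"
    using assms x Delta_in_M leL_mult_M by (intro joinL_least) (auto simp: m_assoc)
  then have "inv x \<otimes> ?j \<preceq> \<Delta>"
    using x j leL_mult_left_iff[of "inv x \<otimes> ?j" \<Delta> x] by simp
  moreover have "inv x \<otimes> ?j \<in> N"
    using j jH assms H_inter_M_eq_N H_mult H_inv by (simp add: leL_iff)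
  ultimately have "inv x \<otimes> ?j \<in> Div G M \<delta>"
    using Div_delta_eq N_subset_M by (simp add: Div_iff)
  then have "inv (inv x \<otimes> ?j) \<otimes> \<delta> \<in> M"
    by (simp add: Div_iff leL_iff)
  then have "?j \<preceq> x \<otimes> \<delta>"
    using x j by (simp add: leL_iff inv_mult_group m_assoc)
  with j x assms(3) show ?thesis using leL_trans[of g ?j "x \<otimes> \<delta>"] by simp
qed

lemma H_retract_below:
  assumes "x \<in> H" "h \<in> H" "g \<in> carrier G" "h \<preceq> g" "x \<preceq> g \<otimes> \<Delta> [^] (k::nat)"
  shows "\<exists>x'\<in>H. x' \<preceq> g \<and> x \<otimes> inv (\<Delta> [^] k) \<preceq> x'"
  using assms(1,5)
proof (induction k arbitrary: x)
  case 0
  then show ?case using assms(3) by (intro bexI[of _ x]) auto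
next
  case (Suc k)
  have x: "x \<in> carrier G" "h \<in> carrier G" using Suc.prems assms by auto
  have "h \<preceq> g \<otimes> \<Delta> [^] k"
    using assms x leL_mult_Delta_pow_mono(1)[of g 0 k] leL_trans[of h g] by simp
  moreover have "x \<preceq> g \<otimes> \<Delta> [^] k \<otimes> \<Delta>"
    using Suc.prems assms by (simp add: m_assoc)
  ultimately have "x \<otimes> inv \<delta> \<preceq> g \<otimes> \<Delta> [^] k"
    using H_mult_inv_delta_le[OF Suc.prems(1) assms(2)] assms by simp
  moreover have "x \<otimes> inv \<delta> \<in> H"
    using Suc.prems delta_in_N N_subset_H H_mult H_inv by auto
  ultimately obtain x' where x': "x' \<in> H" "x' \<preceq> g" "x \<otimes> inv \<delta> \<otimes> inv (\<Delta> [^] k) \<preceq> x'"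
    using Suc.IH by blast
  have "x \<otimes> inv \<Delta> \<preceq> x \<otimes> inv \<delta>"
    using inv_Delta_le_inv_delta x by (simp add: leL_mult_left_iff)
  then have "x \<otimes> inv \<Delta> \<otimes> inv (\<Delta> [^] k) \<preceq> x \<otimes> inv \<delta> \<otimes> inv (\<Delta> [^] k)"
    using x by (intro leL_mult_Delta_pow(2)) auto
  moreover have "x \<otimes> inv (\<Delta> [^] Suc k) = x \<otimes> inv \<Delta> \<otimes> inv (\<Delta> [^] k)"
    using x by (simp add: inv_mult_group m_assoc)
  ultimately have "x \<otimes> inv (\<Delta> [^] Suc k) \<preceq> x'"
    using x x' leL_trans[of _ "x \<otimes> inv \<delta> \<otimes> inv (\<Delta> [^] k)" x'] by simp
  with x' show ?case by blast
qed

lemma H_retract_above: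
  assumes "x \<in> H" "h \<in> H" "g \<in> carrier G" "g \<preceq> h" "g \<otimes> inv (\<Delta> [^] (k::nat)) \<preceq> x"
  shows "\<exists>x'\<in>H. g \<preceq> x' \<and> x' \<preceq> x \<otimes> \<Delta> [^] k"
  using assms(1,5)
proof (induction k arbitrary: x)
  case 0
  then show ?case using assms(3) by (intro bexI[of _ x]) auto
next
  case (Suc k)
  have x: "x \<in> carrier G" "h \<in> carrier G" using Suc.prems assms by auto
  have "g \<otimes> inv (\<Delta> [^] k) \<preceq> h"
    using assms x leL_mult_Delta_pow_mono(2)[of g 0 k] leL_trans[of _ g h] by simp
  moreover have "g \<otimes> inv (\<Delta> [^] k) \<otimes> inv \<Delta> \<preceq> x"
    using Suc.prems assms inv_Delta_pow_add[of k 1] by (simp add: m_assoc)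
  ultimately have "g \<otimes> inv (\<Delta> [^] k) \<preceq> x \<otimes> \<delta>"
    using le_H_mult_delta[OF Suc.prems(1) assms(2)] assms by simp
  moreover have "x \<otimes> \<delta> \<in> H"
    using Suc.prems delta_in_N N_subset_H H_mult by auto
  ultimately obtain x' where x': "x' \<in> H" "g \<preceq> x'" "x' \<preceq> x \<otimes> \<delta> \<otimes> \<Delta> [^] k"
    using Suc.IH by blast
  have "x \<otimes> \<delta> \<preceq> x \<otimes> \<Delta>"
    using x Div_Delta_le Div_delta_subset[OF balanced_in_Div[OF delta_balanced]]
    by (simp add: leL_mult_left_iff)
  then have "x \<otimes> \<delta> \<otimes> \<Delta> [^] k \<preceq> x \<otimes> \<Delta> \<otimes> \<Delta> [^] k"
    using x by (intro leL_mult_Delta_pow(1)) auto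
  moreover have "x \<otimes> \<Delta> [^] Suc k = x \<otimes> \<Delta> \<otimes> \<Delta> [^] k"
    using x nat_pow_Suc2[of \<Delta> k] by (simp add: m_assoc del: nat_pow_Suc)
  ultimately have "x' \<preceq> x \<otimes> \<Delta> [^] Suc k"
    using x x' leL_trans[of x' "x \<otimes> \<delta> \<otimes> \<Delta> [^] k"] by simp
  with x' show ?case by blast
qed

lemma H_Delta_box_retract_upper:
  assumes "\<alpha> \<in> carrier G" "z \<in> H" "z \<in> Delta_box \<alpha> a b" "\<beta> \<in> H" "\<beta> \<preceq> \<alpha> \<otimes> \<Delta> [^] A"
  shows "\<exists>z'\<in>H. z' \<in> Delta_box \<alpha> (min a A) (b + (a - A))"
proof (cases "a \<le> A")
  case True
  with assms show ?thesis by auto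
next
  case False
  define k where "k = a - A"
  have z: "z \<in> carrier G" "\<alpha> \<otimes> inv (\<Delta> [^] b) \<preceq> z" "z \<preceq> \<alpha> \<otimes> \<Delta> [^] A \<otimes> \<Delta> [^] k"
    using assms False Delta_pow_add[of A k] by (auto simp: Delta_box_def k_def m_assoc)
  then obtain x' where x': "x' \<in> H" "x' \<preceq> \<alpha> \<otimes> \<Delta> [^] A" "z \<otimes> inv (\<Delta> [^] k) \<preceq> x'"
    using H_retract_below[of z \<beta> "\<alpha> \<otimes> \<Delta> [^] A" k] assms by auto
  have "\<alpha> \<otimes> inv (\<Delta> [^] b) \<otimes> inv (\<Delta> [^] k) \<preceq> z \<otimes> inv (\<Delta> [^] k)"
    using z assms by (intro leL_mult_Delta_pow(2)) auto
  then have "\<alpha> \<otimes> inv (\<Delta> [^] (b + k)) \<preceq> x'"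
    using x' z assms leL_trans[of _ "z \<otimes> inv (\<Delta> [^] k)" x'] by (simp add: m_assoc inv_Delta_pow_add)
  with x' False show ?thesis by (auto simp: Delta_box_def k_def)
qed

lemma H_Delta_box_retract_lower:
  assumes "\<alpha> \<in> carrier G" "z \<in> H" "z \<in> Delta_box \<alpha> a b" "\<beta> \<in> H" "\<alpha> \<otimes> inv (\<Delta> [^] B) \<preceq> \<beta>"
  shows "\<exists>z'\<in>H. z' \<in> Delta_box \<alpha> (a + (b - B)) (min b B)"
proof (cases "b \<le> B")
  case True
  with assms show ?thesis by auto
next
  case False
  define k where "k = b - B"
  have z: "z \<in> carrier G" "\<alpha> \<otimes> inv (\<Delta> [^] B) \<otimes> inv (\<Delta> [^] k) \<preceq> z" "z \<preceq> \<alpha> \<otimes> \<Delta> [^] a"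
    using assms False inv_Delta_pow_add[of B k] by (auto simp: Delta_box_def k_def m_assoc)
  then obtain x' where x': "x' \<in> H" "\<alpha> \<otimes> inv (\<Delta> [^] B) \<preceq> x'" "x' \<preceq> z \<otimes> \<Delta> [^] k"
    using H_retract_above[of z \<beta> "\<alpha> \<otimes> inv (\<Delta> [^] B)" k] assms by auto
  have "z \<otimes> \<Delta> [^] k \<preceq> \<alpha> \<otimes> \<Delta> [^] a \<otimes> \<Delta> [^] k"
    using z assms by (intro leL_mult_Delta_pow(1)) auto
  then have "x' \<preceq> \<alpha> \<otimes> \<Delta> [^] (a + k)"
    using x' z assms leL_trans[of x' "z \<otimes> \<Delta> [^] k"] by (simp add: m_assoc Delta_pow_add)
  with x' False show ?thesis by (auto simp: Delta_box_def k_def)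
qed

lemma nearest_H_in_Delta_subbox:
  assumes "\<alpha> \<in> carrier G" "\<beta> \<in> H" "\<beta> \<in> Delta_box \<alpha> A B"
  shows "\<exists>z a b. z \<in> H \<and> z \<in> Delta_box \<alpha> a b \<and> a \<le> A \<and> b \<le> B \<and> a + b = setdist G simples \<alpha> H"
proof -
  let ?r = "setdist G simples \<alpha> H"
  obtain h where h: "h \<in> H" "wdist G simples \<alpha> h = ?r"
    using setdist_attained[OF assms(2), of G simples \<alpha>] by blast
  then obtain a0 b0 where ab0: "a0 + b0 \<le> ?r" "h \<in> Delta_box \<alpha> a0 b0"
    using wdist_le_iff[of \<alpha> h ?r] assms(1) by auto
  have "?r \<le> a0 + b0"
    using wdist_le_iff[of \<alpha> h "a0 + b0"] h ab0 assms(1) by auto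
  have "wdist G simples \<alpha> \<beta> \<le> A + B"
    using wdist_le_iff[of \<alpha> \<beta> "A + B"] assms by auto
  then have "?r \<le> A + B"
    using setdist_le[OF assms(2), of G simples \<alpha>] by linarith
  obtain z1 where z1: "z1 \<in> H" "z1 \<in> Delta_box \<alpha> (min a0 A) (b0 + (a0 - A))"
    using H_Delta_box_retract_upper[OF assms(1) h(1) ab0(2) assms(2)] assms(3) by (auto simp: Delta_box_def)
  obtain z2 where "z2 \<in> H" "z2 \<in> Delta_box \<alpha> (min a0 A + (b0 + (a0 - A) - B)) (min (b0 + (a0 - A)) B)"
    using H_Delta_box_retract_lower[OF assms(1) z1 assms(2)] assms(3) by (auto simp: Delta_box_def)
  moreover have "min a0 A + (b0 + (a0 - A) - B) \<le> A" "min (b0 + (a0 - A)) B \<le> B"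
    "min a0 A + (b0 + (a0 - A) - B) + min (b0 + (a0 - A)) B = ?r"
    using ab0(1) \<open>?r \<le> a0 + b0\<close> \<open>?r \<le> A + B\<close> by auto
  ultimately show ?thesis by blast
qed

lemma H_Delta_box_clamp:
  assumes "\<alpha> \<in> carrier G" "\<beta> \<in> H" "\<beta> \<in> Delta_box \<alpha> A B"
    and "z \<in> H" "z \<in> Delta_box \<alpha> a b" "a \<le> A" "b \<le> B"
  shows "\<exists>\<beta>'\<in>H. \<beta>' \<in> Delta_box \<alpha> a b \<and> \<beta>' \<in> Delta_box \<beta> (B - b) (A - a)"
proof -
  let ?lo = "\<alpha> \<otimes> inv (\<Delta> [^] b)" and ?hi = "\<alpha> \<otimes> \<Delta> [^] a"
  let ?p = "A - a" and ?q = "B - b"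
  have c: "\<beta> \<in> carrier G" "z \<in> carrier G" "?lo \<in> carrier G" "?hi \<in> carrier G"
    using assms by auto
  have z: "?lo \<preceq> z" "z \<preceq> ?hi" using assms by (simp_all add: Delta_box_def)
  have "\<beta> \<preceq> ?hi \<otimes> \<Delta> [^] ?p" "?lo \<otimes> inv (\<Delta> [^] ?q) \<preceq> \<beta>"
    using assms Delta_pow_add[of a ?p] inv_Delta_pow_add[of b ?q] by (simp_all add: Delta_box_def m_assoc)
  then obtain xu xl where xu: "xu \<in> H" "xu \<preceq> ?hi" "\<beta> \<otimes> inv (\<Delta> [^] ?p) \<preceq> xu"
    and xl: "xl \<in> H" "?lo \<preceq> xl" "xl \<preceq> \<beta> \<otimes> \<Delta> [^] ?q"
    using H_retract_below[OF assms(2,4)] H_retract_above[OF assms(2,4)] z c by meson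
  let ?L = "meetL xl z" and ?U = "joinL xu z"
  have LU: "?L \<in> H" "?U \<in> H" "?L \<in> carrier G" "?U \<in> carrier G"
    using H_meetL_joinL xu xl assms by auto
  have "?L \<preceq> z" "z \<preceq> ?U" "?L \<preceq> xl" "xu \<preceq> ?U"
    using xu xl c meetL_le1 meetL_le2 joinL_ge1 joinL_ge2 by auto
  then have L_U: "?L \<preceq> ?U" "?L \<preceq> \<beta> \<otimes> \<Delta> [^] ?q" "\<beta> \<otimes> inv (\<Delta> [^] ?p) \<preceq> ?U"
    using c LU xu xl leL_trans by (meson H_closed inv_closed m_closed nat_pow_closed Delta_closed)+
  have "?lo \<preceq> ?L" "?U \<preceq> ?hi"
    using xu xl z c by (auto intro: meetL_greatest joinL_least)
  let ?\<beta>' = "meetL (joinL \<beta> ?L) ?U"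
  have "?\<beta>' \<in> H" using H_meetL_joinL LU assms(2) by simp
  moreover have "?lo \<preceq> ?\<beta>'" "?\<beta>' \<preceq> ?hi"
    using clamp_bounds(1,2)[of \<beta> ?L ?U] L_U(1) c LU \<open>?lo \<preceq> ?L\<close> \<open>?U \<preceq> ?hi\<close>
      leL_trans[of ?lo ?L ?\<beta>'] leL_trans[of ?\<beta>' ?U ?hi]
    by simp_all
  then have "?\<beta>' \<in> Delta_box \<alpha> a b"
    using c LU by (simp add: Delta_box_def)
  moreover have "?\<beta>' \<in> Delta_box \<beta> ?q ?p"
    using clamp_bounds(3,4)[of \<beta> ?L ?U] L_U c LU Delta_pow_in_M leL_mult_M leL_mult_inv_M
    by (simp add: Delta_box_def)
  ultimately show ?thesis by blast
qed

lemma projections_fellow_travel: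
  assumes "\<alpha>1 \<in> carrier G" "\<alpha>2 \<in> carrier G" "wdist G simples \<alpha>1 \<alpha>2 = 1"
    and "\<beta>1 \<in> proj G simples H \<alpha>1"
  shows "\<exists>\<beta>2\<in>proj G simples H \<alpha>2. wdist G simples \<beta>1 \<beta>2 \<le> 2"
proof -
  let ?r1 = "setdist G simples \<alpha>1 H" and ?r2 = "setdist G simples \<alpha>2 H"
  have \<beta>1: "\<beta>1 \<in> H" "\<beta>1 \<in> carrier G" "wdist G simples \<alpha>1 \<beta>1 = ?r1"
    using assms(4) by (auto simp: proj_def)
  obtain a0 b0 where ab0: "a0 + b0 \<le> 1" "\<alpha>2 \<in> Delta_box \<alpha>1 a0 b0"
    using wdist_le_iff[of \<alpha>1 \<alpha>2 1] assms by auto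
  obtain u v where uv: "u + v \<le> ?r1" "\<beta>1 \<in> Delta_box \<alpha>1 u v"
    using wdist_le_iff[of \<alpha>1 \<beta>1 ?r1] assms(1) \<beta>1 by auto
  have \<beta>1_box: "\<beta>1 \<in> Delta_box \<alpha>2 (b0 + u) (a0 + v)"
    using Delta_box_trans[OF Delta_box_swap[OF ab0(2) assms(1)] uv(2) assms(2)] .
  obtain h2 where "h2 \<in> H" "wdist G simples \<alpha>2 h2 = ?r2"
    using setdist_attained[OF \<beta>1(1), of G simples \<alpha>2] by blast
  then have "?r1 \<le> ?r2 + 1"
    using setdist_le[of h2 H G simples \<alpha>1] wdist_triangle[of \<alpha>1 \<alpha>2 h2] assms by simp
  obtain z a b where z: "z \<in> H" "z \<in> Delta_box \<alpha>2 a b" "a \<le> b0 + u" "b \<le> a0 + v" "a + b = ?r2"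
    using nearest_H_in_Delta_subbox[OF assms(2) \<beta>1(1) \<beta>1_box] by blast
  obtain \<beta>2 where \<beta>2: "\<beta>2 \<in> H" "\<beta>2 \<in> Delta_box \<alpha>2 a b"
    "\<beta>2 \<in> Delta_box \<beta>1 (a0 + v - b) (b0 + u - a)"
    using H_Delta_box_clamp[OF assms(2) \<beta>1(1) \<beta>1_box z(1-4)] by blast
  then have "wdist G simples \<alpha>2 \<beta>2 \<le> ?r2"
    using wdist_le_iff[of \<alpha>2 \<beta>2 ?r2] assms(2) z(5) by (metis H_closed order_refl)
  with \<beta>2(1) have "\<beta>2 \<in> proj G simples H \<alpha>2"
    by (rule proj_memI)
  moreover have "wdist G simples \<beta>1 \<beta>2 \<le> (a0 + v - b) + (b0 + u - a)"
    using wdist_le_iff[of \<beta>1 \<beta>2 "(a0 + v - b) + (b0 + u - a)"] \<beta>1 \<beta>2 by (metis H_closed order_refl)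
  ultimately show ?thesis
    using ab0(1) uv(1) z \<open>?r1 \<le> ?r2 + 1\<close> by (intro bexI[of _ \<beta>2]) auto
qed

end

theorem theorem5p5:
  fixes G :: "('a, 'b) monoid_scheme"
  assumes "garside_structure G M \<Delta>"
    and "parabolic_substructure G M \<Delta> H N \<delta>"
    and "H \<noteq> {\<one>\<^bsub>G\<^esub>}"
    and "S = Div G M \<Delta> - {\<one>\<^bsub>G\<^esub>}"
  shows "\<forall>\<alpha>1\<in>carrier G. \<forall>\<alpha>2\<in>carrier G. wdist G S \<alpha>1 \<alpha>2 = 1 \<longrightarrow>
           (\<forall>\<beta>1\<in>proj G S H \<alpha>1. \<exists>\<beta>2\<in>proj G S H \<alpha>2. wdist G S \<beta>1 \<beta>2 \<le> 5)"
proof -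
  interpret parabolic G M \<Delta> H N \<delta>
    using assms(1,2) unfolding garside_structure_def parabolic_substructure_def
    by (intro parabolic.intro garside.intro lattice_pointed_group.intro pointed_group.intro
        parabolic_axioms.intro garside_axioms.intro lattice_pointed_group_axioms.intro
        pointed_group_axioms.intro) blast+
  show ?thesis
  proof (intro ballI impI)
    fix \<alpha>1 \<alpha>2 \<beta>1
    assume "\<alpha>1 \<in> carrier G" "\<alpha>2 \<in> carrier G" "wdist G S \<alpha>1 \<alpha>2 = 1" "\<beta>1 \<in> proj G S H \<alpha>1"
    then obtain \<beta>2 where "\<beta>2 \<in> proj G S H \<alpha>2" "wdist G S \<beta>1 \<beta>2 \<le> 2"
      using projections_fellow_travel assms(4) by blast
    then show "\<exists>\<beta>2\<in>proj G S H \<alpha>2. wdist G S \<beta>1 \<beta>2 \<le> 5" by force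
  qed
qed

end
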